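(* Let $c>0$, $n=2^k$ with $ck$ an integer, and let $G$ be a graph on vertex set $\{0,1\}^k$ with property P: for every $U\subseteq V(G)$ with $|U|\le\tfrac13k$ and every pattern $p$ with $|p|\le\tfrac13k$, some vertex of $N(U)$ is consistent with $p$. Then in the Prover–Adversary game on $\mathrm{Clique}(G)$ the Adversary has a strategy that wins against any Prover who uses at most $\tfrac19k^2$ memory locations.
   Context: A pattern is $p\in\{*,0,1\}^k$; $p$ is consistent with vertex $v=v_1\cdots v_k$ if $p_i\in\{v_i,*\}$ for all $i$; $|p|$ is the number of non-$*$ positions. $N(U)=\bigcap_{v\in U}\{u:\{u,v\}\in E(G)\}$. $\mathrm{Clique}(G)$ is the CNF with variables $x^i_b$ ($i\in[ck]$, $b\in[k]$), writing $(x^i_b\ne v_b)$ for $\neg x^i_b$ if $v_b=1$ and $x^i_b$ if $v_b=0$, with clauses: for each vertex $v$ and distinct $i,j\in[ck]$, $\bigvee_b(x^i_b\ne v_b)\lor\bigvee_b(x^j_b\ne v_b)$; and for each pair of distinct vertices $u,v$ with $\{u,v\}\notin E(G)$ and distinct $i,j$, $\bigvee_b(x^i_b\ne u_b)\lor\bigvee_b(x^j_b\ne v_b)$. It is satisfiable iff $G$ has a clique of size $ck$. The Prover–Adversary game on a CNF $\phi$: the Prover holds a partial assignment in memory (each assigned variable occupies one memory location), initially empty. In each round the Prover either queries a variable, whose value the Adversary supplies and the Prover stores, or deletes a stored value (a deleted variable may later be queried again and answered differently). The Prover wins when the stored partial assignment falsifies some clause of $\phi$; the Adversary wins if the game continues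 forever. A Prover using at most $M$ memory locations never stores more than $M$ values simultaneously. *)

theory Defs
  imports Main Complex_Main
begin

text \<open>Vertices of \<open>{0,1}^k\<close> are boolean lists of length k (True = 1).\<close>
definition vertices :: "nat \<Rightarrow> bool list set" where
  "vertices k = {v. length v = k}"

text \<open>A pattern in \<open>{*,0,1}^k\<close>: None = *, Some b = b.\<close>
definition patterns :: "nat \<Rightarrow> bool option list set" where
  "patterns k = {p. length p = k}"

definition consistent :: "bool option list \<Rightarrow> bool list \<Rightarrow> bool" where
  "consistent p v \<longleftrightarrow> length p = length v \<and>
     (\<forall>i < length p. p ! i = None \<or> p ! i = Some (v ! i))"

definition pattern_size :: "bool option list \<Rightarrow> nat" where
  "pattern_size p = card {i. i < length p \<and> p ! i \<noteq> None}"

definition is_graph :: "nat \<Rightarrow> (bool list \<Rightarrow> bool list \<Rightarrow> bool) \<Rightarrow> bool" where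
  "is_graph k E \<longleftrightarrow> (\<forall>u \<in> vertices k. \<forall>v \<in> vertices k. E u v \<longleftrightarrow> E v u) \<and>
                     (\<forall>v \<in> vertices k. \<not> E v v)"

definition common_nbhd :: "nat \<Rightarrow> (bool list \<Rightarrow> bool list \<Rightarrow> bool) \<Rightarrow> bool list set \<Rightarrow> bool list set" where
  "common_nbhd k E U = {u \<in> vertices k. \<forall>v \<in> U. E u v}"

definition propertyP :: "nat \<Rightarrow> (bool list \<Rightarrow> bool list \<Rightarrow> bool) \<Rightarrow> bool" where
  "propertyP k E \<longleftrightarrow>
     (\<forall>U. U \<subseteq> vertices k \<longrightarrow> real (card U) \<le> real k / 3 \<longrightarrow>
        (\<forall>p \<in> patterns k. real (pattern_size p) \<le> real k / 3 \<longrightarrow>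
           (\<exists>u \<in> common_nbhd k E U. consistent p u)))"

text \<open>A literal is a pair (x, b), true iff variable x has value b; a clause is a set of literals.
  Variable \<open>x^i_b\<close> is the pair (i, b) (0-based indices: i < ck, b < k).\<close>
type_synonym 'v clause = "('v \<times> bool) set"

definition falsifies :: "('v \<Rightarrow> bool option) \<Rightarrow> 'v clause \<Rightarrow> bool" where
  "falsifies \<rho> C \<longleftrightarrow> (\<forall>(x, b) \<in> C. \<rho> x = Some (\<not> b))"

definition pair_clause :: "nat \<Rightarrow> nat \<Rightarrow> bool list \<Rightarrow> nat \<Rightarrow> bool list \<Rightarrow> (nat \<times> nat) clause" where
  "pair_clause k i u j v =
     {((i, b), \<not> (u ! b)) | b. b < k} \<union> {((j, b), \<not> (v ! b)) | b. b < k}"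

definition clique_cnf :: "nat \<Rightarrow> nat \<Rightarrow> (bool list \<Rightarrow> bool list \<Rightarrow> bool) \<Rightarrow> (nat \<times> nat) clause set" where
  "clique_cnf k m E =
     {pair_clause k i v j v | v i j. v \<in> vertices k \<and> i < m \<and> j < m \<and> i \<noteq> j}
   \<union> {pair_clause k i u j v | u v i j. u \<in> vertices k \<and> v \<in> vertices k \<and> u \<noteq> v \<and> \<not> E u v
                                  \<and> i < m \<and> j < m \<and> i \<noteq> j}"

datatype 'v move = Query 'v | Delete 'v
datatype 'v event = Queried 'v bool | Deleted 'v

type_synonym 'v prover = "'v event list \<Rightarrow> 'v move"
type_synonym 'v adversary = "'v event list \<Rightarrow> 'v \<Rightarrow> bool"

fun apply_event :: "('v \<Rightarrow> bool option) \<Rightarrow> 'v event \<Rightarrow> ('v \<Rightarrow> bool option)" where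
  "apply_event \<rho> (Queried x b) = \<rho>(x := Some b)"
| "apply_event \<rho> (Deleted x) = \<rho>(x := None)"

definition memory :: "'v event list \<Rightarrow> ('v \<Rightarrow> bool option)" where
  "memory h = foldl apply_event Map.empty h"

fun respond :: "'v adversary \<Rightarrow> 'v event list \<Rightarrow> 'v move \<Rightarrow> 'v event" where
  "respond A h (Query x) = Queried x (A h x)"
| "respond A h (Delete x) = Deleted x"

primrec play :: "'v prover \<Rightarrow> 'v adversary \<Rightarrow> nat \<Rightarrow> 'v event list" where
  "play P A 0 = []"
| "play P A (Suc t) = play P A t @ [respond A (play P A t) (P (play P A t))]"

definition prover_wins_at :: "'v clause set \<Rightarrow> 'v prover \<Rightarrow> 'v adversary \<Rightarrow> nat \<Rightarrow> bool" where
  "prover_wins_at \<phi> P A t \<longleftrightarrow> (\<exists>C \<in> \<phi>. falsifies (memory (play P A t)) C)"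

definition memory_bounded :: "'v clause set \<Rightarrow> real \<Rightarrow> 'v prover \<Rightarrow> 'v adversary \<Rightarrow> bool" where
  "memory_bounded \<phi> M P A \<longleftrightarrow>
     (\<forall>t. (\<forall>s < t. \<not> prover_wins_at \<phi> P A s) \<longrightarrow> real (card (dom (memory (play P A t)))) \<le> M)"

definition adversary_wins :: "'v clause set \<Rightarrow> 'v prover \<Rightarrow> 'v adversary \<Rightarrow> bool" where
  "adversary_wins \<phi> P A \<longleftrightarrow> (\<forall>t. \<not> prover_wins_at \<phi> P A t)"

end

theory Submission
  imports Defs
begin

text \<open>The Adversary reads the variable blocks \<open>x\<^sup>i\<close> as clique vertices. It commits block \<open>i\<close> to a
  vertex only once the Prover stores more than \<open>k/3\<close> of its bits, and drops the commitment when
  deletions make the block light again; bits of committed blocks are answered according to the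
  vertex, all other bits arbitrarily. With at most \<open>k\<^sup>2/9\<close> stored bits fewer than \<open>k/3\<close> blocks
  are heavy, so when a block turns heavy, property P provides a vertex adjacent to all committed
  vertices and consistent with the at most \<open>k/3\<close> bits of the block already stored. Thus the
  committed vertices always form a clique agreeing with the memory, while falsifying a clause
  requires two completely stored, hence committed, blocks carrying equal or non-adjacent vertices.\<close>

type_synonym graph = "bool list \<Rightarrow> bool list \<Rightarrow> bool"
type_synonym stored_bits = "nat \<times> nat \<Rightarrow> bool option"
type_synonym commitment = "nat \<Rightarrow> bool list option"

lemma memory_foldl:
  assumes "mem start = Map.empty" and "\<And>s e. mem (step s e) = apply_event (mem s) e"
  shows "mem (foldl step start h) = memory h"
proof (induction h rule: rev_induct)
  case Nil
  then show ?case using assms(1) by (simp add: memory_def)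
next
  case (snoc e h)
  then show ?case using assms(2) by (simp add: memory_def)
qed

lemma adversary_wins_of_invariant:
  fixes step :: "'s \<Rightarrow> 'v event \<Rightarrow> 's" and answer :: "'s \<Rightarrow> 'v \<Rightarrow> bool"
    and mem :: "'s \<Rightarrow> 'v \<Rightarrow> bool option"
  assumes adversary: "\<And>h. A h = answer (foldl step start h)"
    and mem_init: "mem start = Map.empty" and mem_step: "\<And>s e. mem (step s e) = apply_event (mem s) e"
    and init: "I start"
    and query: "\<And>s x. I s \<Longrightarrow> real (card (dom (mem s))) \<le> M \<Longrightarrow> I (step s (Queried x (answer s x)))"
    and delete: "\<And>s x. I s \<Longrightarrow> I (step s (Deleted x))"
    and sound: "\<And>s C. I s \<Longrightarrow> C \<in> \<phi> \<Longrightarrow> \<not> falsifies (mem s) C"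
    and bounded: "memory_bounded \<phi> M P A"
  shows "adversary_wins \<phi> P A"
proof -
  define S where "S t = foldl step start (play P A t)" for t
  have mem_S: "mem (S t) = memory (play P A t)" for t
    unfolding S_def using mem_init mem_step by (rule memory_foldl)
  have no_win: "\<not> prover_wins_at \<phi> P A t" if "I (S t)" for t
    using sound[OF that] unfolding prover_wins_at_def mem_S by blast
  have "I (S t)" for t
  proof (induction t rule: less_induct)
    case (less t)
    show ?case
    proof (cases t)
      case 0
      then show ?thesis using init by (simp add: S_def)
    next
      case (Suc s)
      have "real (card (dom (mem (S s)))) \<le> M"
        using bounded no_win less Suc unfolding memory_bounded_def mem_S by simp
      moreover have "S (Suc s) = step (S s) (respond A (play P A s) (P (play P A s)))"
        by (simp add: S_def)
      ultimately show ?thesis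
        using less[of s] Suc query delete adversary
        by (cases "P (play P A s)") (simp_all add: S_def)
    qed
  qed
  then show ?thesis using no_win unfolding adversary_wins_def by blast
qed

definition block_pattern :: "nat \<Rightarrow> stored_bits \<Rightarrow> nat \<Rightarrow> bool option list" where
  "block_pattern k \<rho> i = map (\<lambda>b. \<rho> (i, b)) [0..<k]"

definition block_size :: "nat \<Rightarrow> stored_bits \<Rightarrow> nat \<Rightarrow> nat" where
  "block_size k \<rho> i = card {b. b < k \<and> \<rho> (i, b) \<noteq> None}"

definition heavy_block :: "nat \<Rightarrow> stored_bits \<Rightarrow> nat \<Rightarrow> bool" where
  "heavy_block k \<rho> i \<longleftrightarrow> k < 3 * block_size k \<rho> i"

lemma block_pattern_in_patterns: "block_pattern k \<rho> i \<in> patterns k"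
  unfolding patterns_def block_pattern_def by simp

lemma pattern_size_block_pattern: "pattern_size (block_pattern k \<rho> i) = block_size k \<rho> i"
proof -
  have "{j. j < length (block_pattern k \<rho> i) \<and> block_pattern k \<rho> i ! j \<noteq> None}
      = {b. b < k \<and> \<rho> (i, b) \<noteq> None}"
    unfolding block_pattern_def by auto
  then show ?thesis unfolding pattern_size_def block_size_def by simp
qed

lemma consistent_block_pattern_iff:
  "consistent (block_pattern k \<rho> i) w \<longleftrightarrow>
     length w = k \<and> (\<forall>b<k. \<rho> (i, b) = None \<or> \<rho> (i, b) = Some (w ! b))"
  unfolding consistent_def block_pattern_def by auto

lemma heavy_block_mono:
  assumes "\<And>b. b < k \<Longrightarrow> \<rho> (i, b) \<noteq> None \<Longrightarrow> \<rho>' (i, b) \<noteq> None" and "heavy_block k \<rho> i"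
  shows "heavy_block k \<rho>' i"
proof -
  have "block_size k \<rho> i \<le> block_size k \<rho>' i"
    unfolding block_size_def by (rule card_mono) (use assms(1) in auto)
  then show ?thesis using assms(2) unfolding heavy_block_def by linarith
qed

lemma block_pattern_fun_upd_other: "j \<noteq> i \<Longrightarrow> block_pattern k (\<rho>((i, b) := y)) j = block_pattern k \<rho> j"
  unfolding block_pattern_def by simp

lemma heavy_block_fun_upd_other: "j \<noteq> i \<Longrightarrow> heavy_block k (\<rho>((i, b) := y)) j \<longleftrightarrow> heavy_block k \<rho> j"
  unfolding heavy_block_def block_size_def by simp

lemma heavy_block_fun_upd_Some:
  "heavy_block k (\<rho>(x := Some v)) i \<longleftrightarrow> heavy_block k (\<rho>(x := Some v')) i"
proof -
  have "{b. b < k \<and> (\<rho>(x := Some v)) (i, b) \<noteq> None} = {b. b < k \<and> (\<rho>(x := Some v')) (i, b) \<noteq> None}"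
    by auto
  then show ?thesis unfolding heavy_block_def block_size_def by simp
qed

lemma heavy_block_full:
  assumes "0 < k" and "\<forall>b<k. \<rho> (i, b) \<noteq> None"
  shows "heavy_block k \<rho> i"
proof -
  have "{b. b < k \<and> \<rho> (i, b) \<noteq> None} = {..<k}" using assms(2) by auto
  then show ?thesis using assms(1) unfolding heavy_block_def block_size_def by simp
qed

lemma sum_block_size_le_card_dom:
  assumes "finite (dom \<rho>)" and "finite I"
  shows "(\<Sum>i\<in>I. block_size k \<rho> i) \<le> card (dom \<rho>)"
proof -
  have "Sigma I (\<lambda>i. {b. b < k \<and> \<rho> (i, b) \<noteq> None}) \<subseteq> dom \<rho>" by auto
  then have "card (Sigma I (\<lambda>i. {b. b < k \<and> \<rho> (i, b) \<noteq> None})) \<le> card (dom \<rho>)"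
    using assms(1) by (rule card_mono[rotated])
  then show ?thesis using assms(2) by (simp add: card_SigmaI block_size_def)
qed

lemma finite_heavy_blocks:
  assumes "finite (dom \<rho>)"
  shows "finite {i. heavy_block k \<rho> i}"
proof (rule finite_subset)
  show "{i. heavy_block k \<rho> i} \<subseteq> fst ` dom \<rho>"
  proof
    fix i assume "i \<in> {i. heavy_block k \<rho> i}"
    then have "0 < block_size k \<rho> i" unfolding heavy_block_def by simp
    then obtain b where "\<rho> (i, b) \<noteq> None" unfolding block_size_def card_gt_0_iff by blast
    then have "(i, b) \<in> dom \<rho>" by blast
    then show "i \<in> fst ` dom \<rho>" by (rule rev_image_eqI) simp
  qed
qed (use assms in simp)

text \<open>Heavy blocks occupy disjoint parts of the memory, each of more than \<open>k/3\<close> locations.\<close>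
lemma three_card_heavy_blocks_le:
  assumes "finite (dom \<rho>)" and "9 * card (dom \<rho>) \<le> k\<^sup>2"
  shows "3 * card {i. heavy_block k \<rho> i} \<le> k"
proof -
  define H where "H = {i. heavy_block k \<rho> i}"
  have "card H * (k + 1) = (\<Sum>i\<in>H. k + 1)" by simp
  also have "\<dots> \<le> (\<Sum>i\<in>H. 3 * block_size k \<rho> i)"
    by (rule sum_mono) (simp add: H_def heavy_block_def)
  also have "\<dots> \<le> 3 * card (dom \<rho>)"
    using sum_block_size_le_card_dom[OF assms(1) finite_heavy_blocks[OF assms(1)]]
    by (simp add: H_def sum_distrib_left[symmetric])
  finally have "3 * card H * (k + 1) \<le> k * k"
    using assms(2) by (simp add: power2_eq_square)
  also have "\<dots> < (k + 1) * (k + 1)" by simp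
  finally have "3 * card H < k + 1" by (simp only: mult_less_cancel2)
  then show ?thesis unfolding H_def by simp
qed

text \<open>\<open>a i = Some w\<close> records that block \<open>i\<close> is committed to the vertex \<open>w\<close>.\<close>
definition adversary_inv ::
  "nat \<Rightarrow> graph \<Rightarrow> commitment \<Rightarrow> stored_bits \<Rightarrow> bool"
where
  "adversary_inv k E a \<rho> \<longleftrightarrow> finite (dom \<rho>) \<and>
     (\<forall>i. a i \<noteq> None \<longleftrightarrow> heavy_block k \<rho> i) \<and>
     (\<forall>i w. a i = Some w \<longrightarrow> consistent (block_pattern k \<rho> i) w) \<and>
     (\<forall>i j u v. i \<noteq> j \<longrightarrow> a i = Some u \<longrightarrow> a j = Some v \<longrightarrow> E u v)"

definition other_block_vertices :: "commitment \<Rightarrow> nat \<Rightarrow> bool list set" where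
  "other_block_vertices a i = {v. \<exists>j. j \<noteq> i \<and> a j = Some v}"

definition clique_extension ::
  "nat \<Rightarrow> graph \<Rightarrow> commitment \<Rightarrow> stored_bits \<Rightarrow> nat \<Rightarrow> bool list"
where
  "clique_extension k E a \<rho> i =
     (SOME w. w \<in> common_nbhd k E (other_block_vertices a i) \<and> consistent (block_pattern k \<rho> i) w)"

lemma clique_extension_spec:
  assumes inv: "adversary_inv k E a \<rho>" and mem: "9 * card (dom \<rho>) \<le> k\<^sup>2"
    and P: "propertyP k E" and light: "\<not> heavy_block k \<rho> i"
  shows "clique_extension k E a \<rho> i \<in> common_nbhd k E (other_block_vertices a i)"
    and "consistent (block_pattern k \<rho> i) (clique_extension k E a \<rho> i)"
proof -
  let ?U = "other_block_vertices a i"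
  have fin: "finite (dom \<rho>)" and heavy: "\<And>j. a j \<noteq> None \<longleftrightarrow> heavy_block k \<rho> j"
    and cons: "\<And>j w. a j = Some w \<Longrightarrow> consistent (block_pattern k \<rho> j) w"
    using inv unfolding adversary_inv_def by blast+
  have "?U \<subseteq> vertices k"
    using cons unfolding other_block_vertices_def vertices_def consistent_block_pattern_iff by blast
  moreover have "real (card ?U) \<le> real k / 3"
  proof -
    have "?U \<subseteq> (the \<circ> a) ` {j. heavy_block k \<rho> j}"
      unfolding other_block_vertices_def using heavy by force
    then have "card ?U \<le> card {j. heavy_block k \<rho> j}"
      by (meson card_image_le card_mono finite_heavy_blocks[OF fin] finite_imageI order_trans)
    then show ?thesis using three_card_heavy_blocks_le[OF fin mem] by linarith
  qed
  moreover have "real (pattern_size (block_pattern k \<rho> i)) \<le> real k / 3"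
    using light unfolding pattern_size_block_pattern heavy_block_def by linarith
  ultimately have "\<exists>w \<in> common_nbhd k E ?U. consistent (block_pattern k \<rho> i) w"
    using P block_pattern_in_patterns unfolding propertyP_def by blast
  then have "clique_extension k E a \<rho> i \<in> common_nbhd k E ?U \<and>
      consistent (block_pattern k \<rho> i) (clique_extension k E a \<rho> i)"
    unfolding clique_extension_def by (rule someI2_bex) blast
  then show "clique_extension k E a \<rho> i \<in> common_nbhd k E ?U"
    and "consistent (block_pattern k \<rho> i) (clique_extension k E a \<rho> i)" by blast+
qed

lemma adversary_inv_assign:
  assumes inv: "adversary_inv k E a \<rho>" and G: "is_graph k E"
    and cons: "consistent (block_pattern k \<rho> i) w"
    and adj: "\<forall>v \<in> other_block_vertices a i. E w v"
    and heavy: "heavy_block k (\<rho>((i, b) := Some (w ! b))) i"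
  shows "adversary_inv k E (a(i := Some w)) (\<rho>((i, b) := Some (w ! b)))"
proof -
  let ?\<rho> = "\<rho>((i, b) := Some (w ! b))"
  have fin: "finite (dom \<rho>)" and heavy_iff: "\<And>j. a j \<noteq> None \<longleftrightarrow> heavy_block k \<rho> j"
    and cons_all: "\<And>j u. a j = Some u \<Longrightarrow> consistent (block_pattern k \<rho> j) u"
    and clique: "\<And>j j' u v. j \<noteq> j' \<Longrightarrow> a j = Some u \<Longrightarrow> a j' = Some v \<Longrightarrow> E u v"
    using inv unfolding adversary_inv_def by blast+
  have "(a(i := Some w)) j \<noteq> None \<longleftrightarrow> heavy_block k ?\<rho> j" for j
    using heavy heavy_iff heavy_block_fun_upd_other by (cases "j = i") auto
  moreover have "consistent (block_pattern k ?\<rho> j) u" if "(a(i := Some w)) j = Some u" for j u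
  proof (cases "j = i")
    case True
    then show ?thesis using that cons unfolding consistent_block_pattern_iff by auto
  next
    case False
    then show ?thesis using that cons_all block_pattern_fun_upd_other by simp
  qed
  moreover have "E u v" if "j \<noteq> j'" "(a(i := Some w)) j = Some u" "(a(i := Some w)) j' = Some v" for j j' u v
  proof -
    have in_vertices: "u \<in> vertices k" if "consistent (block_pattern k \<rho> j) u" for j u
      using that unfolding vertices_def consistent_block_pattern_iff by simp
    have symmetric: "E u w \<longleftrightarrow> E w u" if "u \<in> vertices k" for u
      using G that in_vertices[OF cons] unfolding is_graph_def by blast
    consider "j = i" | "j' = i" | "j \<noteq> i" "j' \<noteq> i" by blast
    then show ?thesis
    proof cases
      case 1
      then have "u = w" "v \<in> other_block_vertices a i"
        using that unfolding other_block_vertices_def by auto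
      then show ?thesis using adj by simp
    next
      case 2
      then have "u \<in> other_block_vertices a i" "a j = Some u" "v = w"
        using that unfolding other_block_vertices_def by auto
      then show ?thesis using adj symmetric in_vertices[OF cons_all] by simp
    next
      case 3
      then show ?thesis using that clique by auto
    qed
  qed
  ultimately show ?thesis using fin unfolding adversary_inv_def by simp
qed

lemma adversary_inv_store_light:
  assumes inv: "adversary_inv k E a \<rho>" and unassigned: "a i = None"
    and light: "\<not> heavy_block k (\<rho>((i, b) := Some v)) i"
  shows "adversary_inv k E a (\<rho>((i, b) := Some v))"
proof -
  let ?\<rho> = "\<rho>((i, b) := Some v)"
  have fin: "finite (dom \<rho>)" and heavy_iff: "\<And>j. a j \<noteq> None \<longleftrightarrow> heavy_block k \<rho> j"
    and cons_all: "\<And>j u. a j = Some u \<Longrightarrow> consistent (block_pattern k \<rho> j) u"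
    and clique: "\<forall>j j' u w. j \<noteq> j' \<longrightarrow> a j = Some u \<longrightarrow> a j' = Some w \<longrightarrow> E u w"
    using inv unfolding adversary_inv_def by blast+
  have "a j \<noteq> None \<longleftrightarrow> heavy_block k ?\<rho> j" for j
    using unassigned light heavy_iff[of j] heavy_block_fun_upd_other by (cases "j = i") auto
  moreover have "consistent (block_pattern k ?\<rho> j) u" if "a j = Some u" for j u
  proof -
    have "j \<noteq> i" using that unassigned by auto
    then show ?thesis using that cons_all block_pattern_fun_upd_other by simp
  qed
  ultimately show ?thesis using fin clique unfolding adversary_inv_def by simp
qed

definition release_block :: "nat \<Rightarrow> commitment \<Rightarrow> stored_bits \<Rightarrow> nat \<Rightarrow> commitment" where
  "release_block k a \<rho> i = (if heavy_block k \<rho> i then a else a(i := None))"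

lemma adversary_inv_delete:
  assumes inv: "adversary_inv k E a \<rho>"
  shows "adversary_inv k E (release_block k a (\<rho>((i, b) := None)) i) (\<rho>((i, b) := None))"
proof -
  let ?\<rho> = "\<rho>((i, b) := None)" and ?a = "release_block k a (\<rho>((i, b) := None)) i"
  have fin: "finite (dom \<rho>)" and heavy_iff: "\<And>j. a j \<noteq> None \<longleftrightarrow> heavy_block k \<rho> j"
    and cons_all: "\<And>j u. a j = Some u \<Longrightarrow> consistent (block_pattern k \<rho> j) u"
    and clique: "\<And>j j' u v. j \<noteq> j' \<Longrightarrow> a j = Some u \<Longrightarrow> a j' = Some v \<Longrightarrow> E u v"
    using inv unfolding adversary_inv_def by blast+
  have released: "?a j = Some u \<Longrightarrow> a j = Some u" for j u
    unfolding release_block_def by (auto split: if_splits)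
  have "heavy_block k \<rho> j" if "heavy_block k ?\<rho> j" for j
  proof (rule heavy_block_mono[OF _ that])
    fix b' assume "?\<rho> (j, b') \<noteq> None"
    then show "\<rho> (j, b') \<noteq> None" by (cases "(j, b') = (i, b)") auto
  qed
  then have "?a i \<noteq> None \<longleftrightarrow> heavy_block k ?\<rho> i"
    using heavy_iff[of i] unfolding release_block_def by auto
  moreover have "?a j \<noteq> None \<longleftrightarrow> heavy_block k ?\<rho> j" if "j \<noteq> i" for j
    using that heavy_iff[of j] heavy_block_fun_upd_other unfolding release_block_def by simp
  ultimately have "?a j \<noteq> None \<longleftrightarrow> heavy_block k ?\<rho> j" for j
    by (cases "j = i") simp_all
  moreover have "consistent (block_pattern k ?\<rho> j) u" if "?a j = Some u" for j u
    using cons_all[OF released[OF that]] unfolding consistent_block_pattern_iff by auto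
  moreover have "\<forall>j j' u v. j \<noteq> j' \<longrightarrow> ?a j = Some u \<longrightarrow> ?a j' = Some v \<longrightarrow> E u v"
    using clique released by blast
  ultimately show ?thesis using fin unfolding adversary_inv_def by simp
qed

text \<open>A query commits block \<open>i\<close> when storing the queried bit makes it heavy; \<open>False\<close> is only a
  placeholder, since heaviness does not depend on the stored value.\<close>
fun query_assignment :: "nat \<Rightarrow> graph \<Rightarrow> commitment \<Rightarrow> stored_bits \<Rightarrow> nat \<times> nat \<Rightarrow> commitment" where
  "query_assignment k E a \<rho> (i, b) =
     (if a i = None \<and> heavy_block k (\<rho>((i, b) := Some False)) i
      then a(i := Some (clique_extension k E a \<rho> i)) else a)"

text \<open>Bits of light blocks are unconstrained, so they may be answered arbitrarily.\<close>
fun query_answer :: "nat \<Rightarrow> graph \<Rightarrow> commitment \<Rightarrow> stored_bits \<Rightarrow> nat \<times> nat \<Rightarrow> bool" where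
  "query_answer k E a \<rho> (i, b) =
     (case query_assignment k E a \<rho> (i, b) i of None \<Rightarrow> False | Some w \<Rightarrow> w ! b)"

lemma adversary_inv_query:
  assumes inv: "adversary_inv k E a \<rho>" and mem: "9 * card (dom \<rho>) \<le> k\<^sup>2"
    and G: "is_graph k E" and P: "propertyP k E"
  shows "adversary_inv k E (query_assignment k E a \<rho> (i, b)) (\<rho>((i, b) := Some (query_answer k E a \<rho> (i, b))))"
proof -
  have heavy_iff: "\<And>j. a j \<noteq> None \<longleftrightarrow> heavy_block k \<rho> j"
    and cons_all: "\<And>j u. a j = Some u \<Longrightarrow> consistent (block_pattern k \<rho> j) u"
    and clique: "\<And>j j' u v. j \<noteq> j' \<Longrightarrow> a j = Some u \<Longrightarrow> a j' = Some v \<Longrightarrow> E u v"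
    using inv unfolding adversary_inv_def by blast+
  note heavy_value = heavy_block_fun_upd_Some[where x = "(i, b)" and v' = False]
  consider (assigned) w where "a i = Some w"
    | (promoted) "a i = None" "heavy_block k (\<rho>((i, b) := Some False)) i"
    | (light) "a i = None" "\<not> heavy_block k (\<rho>((i, b) := Some False)) i"
    by (cases "a i") auto
  then show ?thesis
  proof cases
    case assigned
    have adj: "\<forall>v \<in> other_block_vertices a i. E w v"
    proof
      fix v assume "v \<in> other_block_vertices a i"
      then obtain j where "j \<noteq> i" "a j = Some v" unfolding other_block_vertices_def by blast
      then show "E w v" using clique[of i j w v] assigned by simp
    qed
    have "heavy_block k (\<rho>((i, b) := Some (w ! b))) i"
      by (rule heavy_block_mono[where \<rho> = \<rho>]) (use heavy_iff[of i] assigned in auto)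
    then have "adversary_inv k E (a(i := Some w)) (\<rho>((i, b) := Some (w ! b)))"
      by (rule adversary_inv_assign[OF inv G cons_all[OF assigned] adj])
    then show ?thesis using assigned by (simp add: fun_upd_idem)
  next
    case promoted
    define w where "w = clique_extension k E a \<rho> i"
    have light: "\<not> heavy_block k \<rho> i" using promoted heavy_iff by blast
    have cons: "consistent (block_pattern k \<rho> i) w"
      unfolding w_def by (rule clique_extension_spec(2)[OF inv mem P light])
    have adj: "\<forall>v \<in> other_block_vertices a i. E w v"
      using clique_extension_spec(1)[OF inv mem P light] unfolding w_def common_nbhd_def by blast
    have "heavy_block k (\<rho>((i, b) := Some (w ! b))) i"
      using promoted(2) heavy_value[where v = "w ! b"] by blast
    then have "adversary_inv k E (a(i := Some w)) (\<rho>((i, b) := Some (w ! b)))"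
      by (rule adversary_inv_assign[OF inv G cons adj])
    then show ?thesis using promoted by (simp add: w_def)
  next
    case light
    have "\<not> heavy_block k (\<rho>((i, b) := Some (query_answer k E a \<rho> (i, b)))) i"
      using light(2) heavy_value by blast
    moreover have "query_assignment k E a \<rho> (i, b) = a" using light by simp
    ultimately show ?thesis using adversary_inv_store_light[OF inv light(1)] by simp
  qed
qed

lemma pair_clause_commute: "pair_clause k i u j v = pair_clause k j v i u"
  unfolding pair_clause_def by blast

lemma falsifies_pair_clause:
  assumes "falsifies \<rho> (pair_clause k i u j v)"
  shows "\<forall>b<k. \<rho> (i, b) = Some (u ! b)"
proof (intro allI impI)
  fix b assume "b < k"
  then have "((i, b), \<not> u ! b) \<in> pair_clause k i u j v" unfolding pair_clause_def by blast
  then show "\<rho> (i, b) = Some (u ! b)" using assms unfolding falsifies_def by fastforce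
qed

lemma adversary_inv_full_block:
  assumes inv: "adversary_inv k E a \<rho>" and "0 < k" and u: "u \<in> vertices k"
    and full: "\<forall>b<k. \<rho> (i, b) = Some (u ! b)"
  shows "a i = Some u"
proof -
  have "heavy_block k \<rho> i" using heavy_block_full[OF \<open>0 < k\<close>] full by simp
  then obtain w where w: "a i = Some w" using inv unfolding adversary_inv_def by blast
  then have "consistent (block_pattern k \<rho> i) w" using inv unfolding adversary_inv_def by blast
  then have "w = u"
    using full u unfolding consistent_block_pattern_iff vertices_def by (simp add: nth_equalityI)
  then show ?thesis using w by simp
qed

lemma adversary_inv_not_falsifies:
  assumes inv: "adversary_inv k E a \<rho>" and G: "is_graph k E" and "0 < k"
    and C: "C \<in> clique_cnf k m E"
  shows "\<not> falsifies \<rho> C"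
proof
  assume falsified: "falsifies \<rho> C"
  have clique: "\<And>i j u v. i \<noteq> j \<Longrightarrow> a i = Some u \<Longrightarrow> a j = Some v \<Longrightarrow> E u v"
    using inv unfolding adversary_inv_def by blast
  obtain i j u v where "C = pair_clause k i u j v" "u \<in> vertices k" "v \<in> vertices k" "i \<noteq> j"
    and not_edge: "\<not> E u v"
    using C G unfolding clique_cnf_def is_graph_def by blast
  then have "a i = Some u" and "a j = Some v" and "i \<noteq> j"
    using adversary_inv_full_block[OF inv \<open>0 < k\<close>] falsifies_pair_clause falsified
    by (metis pair_clause_commute)+
  then show False using clique not_edge by blast
qed

fun adversary_step ::
  "nat \<Rightarrow> graph \<Rightarrow> commitment \<times> stored_bits \<Rightarrow> (nat \<times> nat) event \<Rightarrow> commitment \<times> stored_bits"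
where
  "adversary_step k E (a, \<rho>) (Queried x v) = (query_assignment k E a \<rho> x, \<rho>(x := Some v))"
| "adversary_step k E (a, \<rho>) (Deleted x) = (release_block k a (\<rho>(x := None)) (fst x), \<rho>(x := None))"

lemma snd_adversary_step: "snd (adversary_step k E s e) = apply_event (snd s) e"
  by (cases s; cases e) simp_all

lemma adversary_inv_empty: "adversary_inv k E Map.empty Map.empty"
  unfolding adversary_inv_def heavy_block_def block_size_def by simp

definition clique_adversary :: "nat \<Rightarrow> graph \<Rightarrow> (nat \<times> nat) adversary" where
  "clique_adversary k E h = case_prod (query_answer k E) (foldl (adversary_step k E) (Map.empty, Map.empty) h)"

lemma clique_adversary_wins:
  assumes G: "is_graph k E" and P: "propertyP k E" and "0 < k"
    and bounded: "memory_bounded (clique_cnf k m E) (real k ^ 2 / 9) Prover (clique_adversary k E)"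
  shows "adversary_wins (clique_cnf k m E) Prover (clique_adversary k E)"
proof (rule adversary_wins_of_invariant[where I = "case_prod (adversary_inv k E)" and mem = snd
      and start = "(Map.empty, Map.empty)"])
  have mem_bound: "9 * card (dom \<rho>) \<le> k\<^sup>2" if "real (card (dom \<rho>)) \<le> real k ^ 2 / 9"
    for \<rho> :: stored_bits
    using that by (simp add: field_simps flip: of_nat_mult of_nat_power of_nat_le_iff)
  show "case_prod (adversary_inv k E) (adversary_step k E s (Queried x (case_prod (query_answer k E) s x)))"
    if "case_prod (adversary_inv k E) s" and "real (card (dom (snd s))) \<le> real k ^ 2 / 9" for s x
    using that adversary_inv_query[OF _ _ G P] mem_bound by (cases s; cases x) auto
  show "case_prod (adversary_inv k E) (adversary_step k E s (Deleted x))"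
    if "case_prod (adversary_inv k E) s" for s x
    using that adversary_inv_delete by (cases s; cases x) auto
  show "\<not> falsifies (snd s) C" if "case_prod (adversary_inv k E) s" and "C \<in> clique_cnf k m E" for s C
    using that adversary_inv_not_falsifies[OF _ G \<open>0 < k\<close>] by (cases s) auto
qed (simp_all add: clique_adversary_def snd_adversary_step adversary_inv_empty bounded)

theorem mainTheorem6:
  fixes c :: real and k m :: nat and E :: "bool list \<Rightarrow> bool list \<Rightarrow> bool"
  assumes "c > 0"
    and "real m = c * real k"
    and "is_graph k E"
    and "propertyP k E"
  shows "\<exists>A :: (nat \<times> nat) adversary. \<forall>P :: (nat \<times> nat) prover.
           memory_bounded (clique_cnf k m E) (real k ^ 2 / 9) P A \<longrightarrow>
           adversary_wins (clique_cnf k m E) P A"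
proof (intro exI allI impI)
  fix P :: "(nat \<times> nat) prover"
  assume bounded: "memory_bounded (clique_cnf k m E) (real k ^ 2 / 9) P (clique_adversary k E)"
  show "adversary_wins (clique_cnf k m E) P (clique_adversary k E)"
  proof (cases "k = 0")
    case True
    \<comment> \<open>Every clause would be empty and thus falsified; the game survives only because
      \<open>m = c k = 0\<close> leaves no clauses at all.\<close>
    then have "clique_cnf k m E = {}" using assms(2) unfolding clique_cnf_def by simp
    then show ?thesis unfolding adversary_wins_def prover_wins_at_def by simp
  next
    case False
    then show ?thesis using clique_adversary_wins[OF assms(3,4) _ bounded] by simp
  qed
qed

end
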